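(* Let $F$ and $\pi$ be smooth positive probability densities on $\mathbb{T}^2=[0,1]^2$ (periodic). For a smooth vector field $v$ on $\mathbb{T}^2$ satisfying $\mathrm{div}(Fv)=0$, there exists a smooth diffeomorphism $Z:\mathbb{T}^2\to\mathbb{T}^2$ such that $\bar v:=Z_{\#}v$ satisfies $\mathrm{div}(\pi\bar v)=0$. Moreover, the operators $\bar v\cdot\nabla$ and $v\cdot\nabla$ have the same eigenvalues, and $\phi$ is an eigenfunction of $v\cdot\nabla$ if and only if $\bar\phi$, defined by $\bar\phi(Z(x))=\phi(x)$, is an eigenfunction of $\bar v\cdot\nabla$.
   Context: For a diffeomorphism $Z$ of $\mathbb{T}^2$ with $z=Z(x)$, the pushforward of a vector field $v$ is $Z_{\#}v:=(v\cdot\nabla_x Z)\circ Z^{-1}$, i.e. $Z_\# v(z)=DZ(Z^{-1}(z))\,v(Z^{-1}(z))$. *)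

theory Defs
  imports "HOL-Analysis.Analysis"
begin

text \<open>The torus T^2 = R^2 / Z^2 is modelled through Z^2-periodic objects on real^2.\<close>

definition lattice_equiv :: "real^2 \<Rightarrow> real^2 \<Rightarrow> bool" where
  "lattice_equiv x y \<longleftrightarrow> (\<forall>i. (x - y) $ i \<in> \<int>)"

definition periodic2 :: "(real^2 \<Rightarrow> 'a) \<Rightarrow> bool" where
  "periodic2 f \<longleftrightarrow> (\<forall>x y. lattice_equiv x y \<longrightarrow> f x = f y)"

fun C_k :: "nat \<Rightarrow> (real^2 \<Rightarrow> 'a::real_normed_vector) \<Rightarrow> bool" where
  "C_k 0 f = continuous_on UNIV f"
| "C_k (Suc k) f = ((\<forall>x. f differentiable (at x)) \<and>
      (\<forall>i. C_k k (\<lambda>x. frechet_derivative f (at x) (axis i 1))))"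

definition smooth2 :: "(real^2 \<Rightarrow> 'a::real_normed_vector) \<Rightarrow> bool" where
  "smooth2 f \<longleftrightarrow> (\<forall>k. C_k k f)"

definition prob_density :: "(real^2 \<Rightarrow> real) \<Rightarrow> bool" where
  "prob_density F \<longleftrightarrow> smooth2 F \<and> periodic2 F \<and> (\<forall>x. F x > 0) \<and>
      (F has_integral 1) (cbox 0 1)"

definition vfield :: "(real^2 \<Rightarrow> real^2) \<Rightarrow> bool" where
  "vfield v \<longleftrightarrow> smooth2 v \<and> periodic2 v"

definition divergence :: "(real^2 \<Rightarrow> real^2) \<Rightarrow> real^2 \<Rightarrow> real" where
  "divergence u x = (\<Sum>i\<in>UNIV. frechet_derivative (\<lambda>y. u y $ i) (at x) (axis i 1))"

text \<open>A smooth diffeomorphism of T^2, given by a lift Z : R^2 -> R^2 together with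
  a lift W of its inverse; both descend to T^2 and are mutually inverse there.\<close>
definition torus_diffeo :: "(real^2 \<Rightarrow> real^2) \<Rightarrow> (real^2 \<Rightarrow> real^2) \<Rightarrow> bool" where
  "torus_diffeo Z W \<longleftrightarrow> smooth2 Z \<and> smooth2 W \<and>
     (\<forall>x y. lattice_equiv x y \<longrightarrow> lattice_equiv (Z x) (Z y)) \<and>
     (\<forall>x y. lattice_equiv x y \<longrightarrow> lattice_equiv (W x) (W y)) \<and>
     (\<forall>x. lattice_equiv (W (Z x)) x) \<and> (\<forall>z. lattice_equiv (Z (W z)) z)"

text \<open>Pushforward Z_# v (z) = DZ(Z^{-1} z) v(Z^{-1} z), with W the lift of Z^{-1}.\<close>
definition pushforward :: "(real^2 \<Rightarrow> real^2) \<Rightarrow> (real^2 \<Rightarrow> real^2) \<Rightarrow> (real^2 \<Rightarrow> real^2) \<Rightarrow> real^2 \<Rightarrow> real^2" where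
  "pushforward Z W v z = frechet_derivative Z (at (W z)) (v (W z))"

definition eigenfun :: "(real^2 \<Rightarrow> real^2) \<Rightarrow> complex \<Rightarrow> (real^2 \<Rightarrow> complex) \<Rightarrow> bool" where
  "eigenfun v lam phi \<longleftrightarrow> smooth2 phi \<and> periodic2 phi \<and> (\<exists>x. phi x \<noteq> 0) \<and>
     (\<forall>x. frechet_derivative phi (at x) (v x) = lam * phi x)"

definition eigenvalues :: "(real^2 \<Rightarrow> real^2) \<Rightarrow> complex set" where
  "eigenvalues v = {lam. \<exists>phi. eigenfun v lam phi}"

end

(*
  Both densities are straightened out by their Knothe-Rosenblatt maps.  For a smooth positive
  Z^2-periodic density F put H(x) = int_0^{x_2} F(x_1, t) dt, M(a) = H(a, 1), C(s) = int_0^s M and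
  K = C(1).  Then Psi_F(x) = (C(x_1) / K, H(x) / M(x_1)) is a diffeomorphism of R^2 that commutes
  with integer translations and has Jacobian determinant F / K.  Hence Z = Psi_pi^-1 o Psi_F
  descends to the torus and satisfies pi(Z x) det DZ(x) = (K_pi / K_F) F(x).  The Piola identity
  div ((det DZ)^-1 DZ u) = (div u) / det DZ (both sides taken at Z^-1), which rests on the symmetry
  of second derivatives, turns div (F v) = 0 into div (pi Z_# v) = 0.  Finally the chain rule gives
  D(phi o Z^-1) (Z_# v) = (D phi v) o Z^-1, so Z conjugates v.grad to (Z_# v).grad.
*)

theory Submission
  imports Defs
begin

section \<open>Partial derivatives and smoothness on the plane\<close>

definition vec2 :: "real \<Rightarrow> real \<Rightarrow> real^2" where
  "vec2 a b = a *\<^sub>R axis 1 1 + b *\<^sub>R axis 2 1"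

lemma axis_nth_2 [simp]:
  "axis (1::2) (1::real) $ 1 = 1" "axis (1::2) (1::real) $ 2 = 0"
  "axis (2::2) (1::real) $ 1 = 0" "axis (2::2) (1::real) $ 2 = 1"
  by (simp_all add: axis_def)

lemma vec2_nth [simp]: "vec2 a b $ 1 = a" "vec2 a b $ 2 = b"
  by (simp_all add: vec2_def axis_def)

lemma vec2_eta [simp]: "vec2 (x$1) (x$2) = x"
  by (simp add: vec_eq_iff forall_2)

lemma linear_vec2_expand:
  assumes "linear L"
  shows "L (x::real^2) = x$1 *\<^sub>R L (axis 1 1) + x$2 *\<^sub>R L (axis 2 1)"
proof -
  have "L x = L (vec2 (x$1) (x$2))" by simp
  then show ?thesis by (simp add: vec2_def linear_add[OF assms] linear_scale[OF assms])
qed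

lemma has_derivative_vec_nth [derivative_intros]:
  "(f has_derivative f') F \<Longrightarrow> ((\<lambda>x. f x $ i) has_derivative (\<lambda>h. f' h $ i)) F"
  by (rule bounded_linear.has_derivative[OF bounded_linear_vec_nth])

lemma has_derivative_vec2 [derivative_intros]:
  assumes "(f has_derivative f') F" "(g has_derivative g') F"
  shows "((\<lambda>x. vec2 (f x) (g x)) has_derivative (\<lambda>h. vec2 (f' h) (g' h))) F"
  unfolding vec2_def
  by (intro has_derivative_add bounded_linear.has_derivative[OF bounded_linear_scaleR_left] assms)

lemma continuous_on_vec2 [continuous_intros]:
  "continuous_on S f \<Longrightarrow> continuous_on S g \<Longrightarrow> continuous_on S (\<lambda>x. vec2 (f x) (g x))"
  unfolding vec2_def by (intro continuous_intros)

definition partial :: "2 \<Rightarrow> (real^2 \<Rightarrow> 'a::real_normed_vector) \<Rightarrow> real^2 \<Rightarrow> 'a" where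
  "partial i f x = frechet_derivative f (at x) (axis i 1)"

lemma has_derivative_frechet_derivative:
  "f differentiable (at x) \<Longrightarrow> (f has_derivative frechet_derivative f (at x)) (at x)"
  using frechet_derivative_works by blast

lemma has_derivative_partials:
  assumes "f differentiable at x"
  shows "(f has_derivative (\<lambda>h. h$1 *\<^sub>R partial 1 f x + h$2 *\<^sub>R partial 2 f x)) (at x)"
proof -
  note d = has_derivative_frechet_derivative[OF assms]
  then have "linear (frechet_derivative f (at x))"
    using has_derivative_linear by blast
  then have "frechet_derivative f (at x) = (\<lambda>h. h$1 *\<^sub>R partial 1 f x + h$2 *\<^sub>R partial 2 f x)"
    by (intro ext) (subst linear_vec2_expand, simp_all add: partial_def)
  with d show ?thesis by simp
qed

lemma partial_eq:
  assumes "(f has_derivative f') (at x)"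
  shows "partial i f x = f' (axis i 1)"
  using frechet_derivative_at[OF assms] by (simp add: partial_def)

lemma partial_const: "partial i (\<lambda>x. c) = (\<lambda>x. 0)"
  by (simp add: partial_def[abs_def])

lemma partial_linear:
  assumes "bounded_linear L" "f differentiable (at x)"
  shows "partial i (\<lambda>x. L (f x)) x = L (partial i f x)"
  using partial_eq[OF bounded_linear.has_derivative[OF assms(1) has_derivative_frechet_derivative[OF assms(2)]]]
  by (simp add: partial_def)

lemma partial_add:
  assumes "f differentiable (at x)" "g differentiable (at x)"
  shows "partial i (\<lambda>x. f x + g x) x = partial i f x + partial i g x"
  using partial_eq[OF has_derivative_add[OF has_derivative_frechet_derivative[OF assms(1)]
      has_derivative_frechet_derivative[OF assms(2)]]]
  by (simp add: partial_def)

lemma partial_minus: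
  assumes "f differentiable (at x)" "g differentiable (at x)"
  shows "partial i (\<lambda>x. f x - g x) x = partial i f x - partial i g x"
  using partial_eq[OF has_derivative_diff[OF has_derivative_frechet_derivative[OF assms(1)]
        has_derivative_frechet_derivative[OF assms(2)]]]
  by (simp add: partial_def)

lemma partial_bilinear:
  fixes prod :: "'a::real_normed_vector \<Rightarrow> 'b::real_normed_vector \<Rightarrow> 'c::real_normed_vector"
  assumes "bounded_bilinear prod" "f differentiable (at x)" "g differentiable (at x)"
  shows "partial i (\<lambda>x. prod (f x) (g x)) x = prod (f x) (partial i g x) + prod (partial i f x) (g x)"
  using partial_eq[OF bounded_bilinear.FDERIV[OF assms(1) has_derivative_frechet_derivative[OF assms(2)]
      has_derivative_frechet_derivative[OF assms(3)]]]
  by (simp add: partial_def)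

lemma partial_mult:
  assumes "f differentiable (at x)" "g differentiable (at x)"
  shows "partial i (\<lambda>x. f x * g x) x = f x * partial i g x + partial i f x * (g x :: real)"
  by (rule partial_bilinear[OF bounded_bilinear_mult assms])

lemma partial_divide:
  assumes "f differentiable (at x)" "g differentiable (at x)" "g x \<noteq> 0"
  shows "partial i (\<lambda>x. f x / g x :: real) x = (partial i f x * g x - f x * partial i g x) / (g x * g x)"
  using partial_eq[OF has_derivative_divide'[OF has_derivative_frechet_derivative[OF assms(1)]
        has_derivative_frechet_derivative[OF assms(2)] assms(3)]]
  by (simp add: partial_def)

lemma partial_comp:
  assumes "h differentiable (at x)" "g differentiable (at (h x))"
  shows "partial i (\<lambda>x. g (h x)) x
    = (partial i h x)$1 *\<^sub>R partial 1 g (h x) + (partial i h x)$2 *\<^sub>R partial 2 g (h x)"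
proof -
  have "((\<lambda>x. g (h x)) has_derivative (\<lambda>k. (frechet_derivative h (at x) k)$1 *\<^sub>R partial 1 g (h x)
      + (frechet_derivative h (at x) k)$2 *\<^sub>R partial 2 g (h x))) (at x)"
    using diff_chain_at[OF has_derivative_frechet_derivative[OF assms(1)] has_derivative_partials[OF assms(2)]]
    by (simp add: o_def)
  from partial_eq[OF this] show ?thesis by (simp add: partial_def)
qed

lemma partial_vec_nth: "f differentiable (at x) \<Longrightarrow> partial j (\<lambda>y. f y $ i) x = partial j f x $ i"
  using partial_linear[OF bounded_linear_vec_nth] by blast

lemma partial_along_line2:
  assumes "g differentiable (at (vec2 a t))"
  shows "((\<lambda>t. g (vec2 a t)) has_real_derivative partial 2 g (vec2 a t)) (at t)"
proof -
  have "((\<lambda>t. vec2 a t) has_derivative (\<lambda>h. vec2 0 h)) (at t)"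
    by (intro derivative_eq_intros) auto
  from diff_chain_at[OF this has_derivative_partials[OF assms]]
  have "((\<lambda>t. g (vec2 a t)) has_derivative (\<lambda>h. partial 2 g (vec2 a t) * h)) (at t)"
    by (simp add: o_def mult.commute)
  then show ?thesis by (simp add: has_field_derivative_def)
qed

lemma partial_along_line1:
  assumes "g differentiable (at (vec2 t b))"
  shows "((\<lambda>t. g (vec2 t b)) has_real_derivative partial 1 g (vec2 t b)) (at t)"
proof -
  have "((\<lambda>t. vec2 t b) has_derivative (\<lambda>h. vec2 h 0)) (at t)"
    by (intro derivative_eq_intros) auto
  from diff_chain_at[OF this has_derivative_partials[OF assms]]
  have "((\<lambda>t. g (vec2 t b)) has_derivative (\<lambda>h. partial 1 g (vec2 t b) * h)) (at t)"
    by (simp add: o_def mult.commute)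
  then show ?thesis by (simp add: has_field_derivative_def)
qed

declare C_k.simps(2) [simp del]

lemma C_k_Suc: "C_k (Suc k) f \<longleftrightarrow> (\<forall>x. f differentiable (at x)) \<and> (\<forall>i. C_k k (partial i f))"
  by (simp add: C_k.simps(2) partial_def[abs_def])

lemma C_k_continuous_on: "C_k k f \<Longrightarrow> continuous_on UNIV f"
  by (cases k) (auto simp: C_k_Suc intro!: differentiable_imp_continuous_on differentiable_at_imp_differentiable_on)

lemma C_k_SucD: "C_k (Suc k) f \<Longrightarrow> C_k k f"
proof (induction k arbitrary: f)
  case 0 then show ?case using C_k_continuous_on by auto
next
  case (Suc k) then show ?case by (auto simp: C_k_Suc)
qed

lemma smooth2_iff: "smooth2 f \<longleftrightarrow> (\<forall>x. f differentiable (at x)) \<and> (\<forall>i. smooth2 (partial i f))"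
proof
  assume "smooth2 f"
  then have "C_k (Suc k) f" for k by (simp add: smooth2_def)
  then show "(\<forall>x. f differentiable (at x)) \<and> (\<forall>i. smooth2 (partial i f))"
    by (auto simp: C_k_Suc smooth2_def)
next
  assume "(\<forall>x. f differentiable (at x)) \<and> (\<forall>i. smooth2 (partial i f))"
  then have "C_k (Suc k) f" for k by (simp add: C_k_Suc smooth2_def)
  then show "smooth2 f" by (auto simp: smooth2_def intro: C_k_SucD)
qed

lemma smooth2_continuous_on: "smooth2 f \<Longrightarrow> continuous_on UNIV f"
  using C_k_continuous_on smooth2_def by blast

lemma smooth2_differentiable: "smooth2 f \<Longrightarrow> f differentiable (at x)"
  using smooth2_iff by blast

lemma smooth2_partial: "smooth2 f \<Longrightarrow> smooth2 (partial i f)"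
  using smooth2_iff by blast

lemma smooth2_isCont: "smooth2 f \<Longrightarrow> isCont f x"
  by (simp add: differentiable_imp_continuous_within smooth2_differentiable)

lemma C_k_const: "C_k k (\<lambda>x. c)"
  by (induction k arbitrary: c) (simp_all add: C_k_Suc partial_const)

lemma C_k_id: "C_k k (\<lambda>x. x)"
proof (cases k)
  case (Suc m)
  have "partial i (\<lambda>x. x) = (\<lambda>x. axis i 1)" for i
    by (simp add: partial_def[abs_def])
  then show ?thesis using Suc by (simp add: C_k_Suc C_k_const)
qed simp

lemma C_k_linear:
  assumes "bounded_linear L"
  shows "C_k k f \<Longrightarrow> C_k k (\<lambda>x. L (f x))"
proof (induction k arbitrary: f)
  case 0 then show ?case
    by (auto intro: continuous_on_compose2[OF linear_continuous_on[OF assms]])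
next
  case (Suc k)
  have d: "\<forall>x. f differentiable (at x)" using Suc.prems by (simp add: C_k_Suc)
  then have "(\<lambda>x. L (f x)) differentiable (at x)" for x
    using bounded_linear.has_derivative[OF assms has_derivative_frechet_derivative[OF d[rule_format]]]
    by (auto simp: differentiable_def)
  moreover have "partial i (\<lambda>x. L (f x)) = (\<lambda>x. L (partial i f x))" for i
    by (intro ext) (simp add: partial_linear[OF assms] d)
  ultimately show ?case using Suc by (simp add: C_k_Suc)
qed

lemma C_k_add: "C_k k f \<Longrightarrow> C_k k g \<Longrightarrow> C_k k (\<lambda>x. f x + g x)"
proof (induction k arbitrary: f g)
  case 0 then show ?case by (auto intro: continuous_on_add)
next
  case (Suc k)
  have d: "\<forall>x. f differentiable (at x)" "\<forall>x. g differentiable (at x)"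
    using Suc.prems by (simp_all add: C_k_Suc)
  moreover have "partial i (\<lambda>x. f x + g x) = (\<lambda>x. partial i f x + partial i g x)" for i
    by (intro ext) (simp add: partial_add d)
  ultimately show ?case using Suc by (auto simp: C_k_Suc intro: differentiable_add)
qed

lemma C_k_bilinear:
  fixes prod :: "'a::real_normed_vector \<Rightarrow> 'b::real_normed_vector \<Rightarrow> 'c::real_normed_vector"
  assumes "bounded_bilinear prod"
  shows "C_k k f \<Longrightarrow> C_k k g \<Longrightarrow> C_k k (\<lambda>x. prod (f x) (g x))"
proof (induction k arbitrary: f g)
  case 0 then show ?case
    using bounded_bilinear.continuous_on[OF assms, of UNIV f g] by simp
next
  case (Suc k)
  have d: "\<forall>x. f differentiable (at x)" "\<forall>x. g differentiable (at x)"
    using Suc.prems by (simp_all add: C_k_Suc)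
  have "C_k k (partial i f)" "C_k k (partial i g)" for i
    using Suc.prems by (simp_all add: C_k_Suc)
  moreover have "C_k k f" "C_k k g" using Suc.prems C_k_SucD by blast+
  ultimately have "C_k k (\<lambda>x. prod (f x) (partial i g x) + prod (partial i f x) (g x))" for i
    by (metis (no_types) C_k_add Suc.IH)
  moreover have "(\<lambda>x. prod (f x) (g x)) differentiable (at x)" for x
    using bounded_bilinear.FDERIV[OF assms has_derivative_frechet_derivative[OF d(1)[rule_format]]
        has_derivative_frechet_derivative[OF d(2)[rule_format]]]
    by (auto simp: differentiable_def)
  moreover have "partial i (\<lambda>x. prod (f x) (g x))
      = (\<lambda>x. prod (f x) (partial i g x) + prod (partial i f x) (g x))" for i
    by (intro ext) (simp add: partial_bilinear[OF assms] d)
  ultimately show ?case unfolding C_k_Suc by presburger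
qed

lemma C_k_comp: "C_k k g \<Longrightarrow> C_k k h \<Longrightarrow> C_k k (\<lambda>x. g (h x))"
proof (induction k arbitrary: g h)
  case 0 then show ?case
    using continuous_on_compose2[of UNIV g UNIV h] by auto
next
  case (Suc k)
  have d: "\<forall>x. g differentiable (at x)" "\<forall>x. h differentiable (at x)"
    using Suc.prems by (simp_all add: C_k_Suc)
  have "C_k k (partial i g)" "C_k k (partial i h)" for i
    using Suc.prems by (simp_all add: C_k_Suc)
  moreover have "C_k k h" using Suc.prems C_k_SucD by blast
  ultimately have "C_k k (\<lambda>x. (partial i h x)$1 *\<^sub>R partial 1 g (h x) + (partial i h x)$2 *\<^sub>R partial 2 g (h x))" for i
    by (intro C_k_add C_k_bilinear[OF bounded_bilinear_scaleR] C_k_linear[OF bounded_linear_vec_nth]) (simp_all add: Suc.IH)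
  moreover have "(\<lambda>x. g (h x)) differentiable (at x)" for x
    using d differentiable_chain_at[of h x g] by (simp add: o_def)
  moreover have "partial i (\<lambda>x. g (h x))
      = (\<lambda>x. (partial i h x)$1 *\<^sub>R partial 1 g (h x) + (partial i h x)$2 *\<^sub>R partial 2 g (h x))" for i
    by (intro ext) (simp add: partial_comp d)
  ultimately show ?case unfolding C_k_Suc by presburger
qed

lemma C_k_inverse: "C_k k f \<Longrightarrow> (\<forall>x. f x \<noteq> 0) \<Longrightarrow> C_k k (\<lambda>x. inverse (f x :: real))"
proof (induction k arbitrary: f)
  case 0 then show ?case
    using continuous_on_inverse[of UNIV f] by simp
next
  case (Suc k)
  have d: "\<forall>x. f differentiable (at x)" using Suc.prems by (simp add: C_k_Suc)
  have hd: "((\<lambda>x. inverse (f x)) has_derivative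
      (\<lambda>h. - (inverse (f x) * frechet_derivative f (at x) h * inverse (f x)))) (at x)" for x
    using has_derivative_compose[OF has_derivative_frechet_derivative[OF d[rule_format]]
        has_derivative_inverse'[OF Suc.prems(2)[rule_format]]] by simp
  have "C_k k (partial i f)" for i using Suc.prems by (simp add: C_k_Suc)
  moreover have "C_k k (\<lambda>x. inverse (f x))" using Suc C_k_SucD by blast
  ultimately have "C_k k (\<lambda>x. - (partial i f x * (inverse (f x) * inverse (f x))))" for i
    by (intro C_k_linear[OF bounded_linear_minus[OF bounded_linear_ident]]
        C_k_bilinear[OF bounded_bilinear_mult])
  moreover have "(\<lambda>x. inverse (f x)) differentiable (at x)" for x
    using hd by (auto simp: differentiable_def)
  moreover have "partial i (\<lambda>x. inverse (f x)) = (\<lambda>x. - (partial i f x * (inverse (f x) * inverse (f x))))" for i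
    using partial_eq[OF hd] by (auto simp: partial_def)
  ultimately show ?case unfolding C_k_Suc by presburger
qed

lemma C_k_minus: "C_k k f \<Longrightarrow> C_k k g \<Longrightarrow> C_k k (\<lambda>x. f x - g x)"
  using C_k_add[of k f "\<lambda>x. - g x"] C_k_linear[OF bounded_linear_minus[OF bounded_linear_ident], of k g]
  by simp

lemma smooth2_const: "smooth2 (\<lambda>x. c)"
  by (simp add: smooth2_def C_k_const)

lemma smooth2_id: "smooth2 (\<lambda>x. x)"
  by (simp add: smooth2_def C_k_id)

lemma smooth2_add: "smooth2 f \<Longrightarrow> smooth2 g \<Longrightarrow> smooth2 (\<lambda>x. f x + g x)"
  by (simp add: smooth2_def C_k_add)

lemma smooth2_minus: "smooth2 f \<Longrightarrow> smooth2 g \<Longrightarrow> smooth2 (\<lambda>x. f x - g x)"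
  by (simp add: smooth2_def C_k_minus)

lemma smooth2_mult:
  "smooth2 f \<Longrightarrow> smooth2 g \<Longrightarrow> smooth2 (\<lambda>x. (f x :: 'a::real_normed_algebra) * g x)"
  by (simp add: smooth2_def C_k_bilinear[OF bounded_bilinear_mult])

lemma smooth2_scaleR: "smooth2 f \<Longrightarrow> smooth2 g \<Longrightarrow> smooth2 (\<lambda>x. f x *\<^sub>R g x)"
  by (simp add: smooth2_def C_k_bilinear[OF bounded_bilinear_scaleR])

lemma smooth2_vec_nth: "smooth2 f \<Longrightarrow> smooth2 (\<lambda>x. f x $ j)"
  by (simp add: smooth2_def C_k_linear[OF bounded_linear_vec_nth])

lemma smooth2_comp: "smooth2 g \<Longrightarrow> smooth2 h \<Longrightarrow> smooth2 (\<lambda>x. g (h x))"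
  by (simp add: smooth2_def C_k_comp)

lemma smooth2_inverse: "smooth2 f \<Longrightarrow> (\<forall>x. f x \<noteq> 0) \<Longrightarrow> smooth2 (\<lambda>x. inverse (f x :: real))"
  by (simp add: smooth2_def C_k_inverse)

lemma smooth2_divide:
  "smooth2 f \<Longrightarrow> smooth2 g \<Longrightarrow> (\<forall>x. g x \<noteq> 0) \<Longrightarrow> smooth2 (\<lambda>x. f x / (g x :: real))"
  by (simp add: divide_inverse smooth2_mult smooth2_inverse)

lemma C_k_vec2: "C_k k f \<Longrightarrow> C_k k g \<Longrightarrow> C_k k (\<lambda>x. vec2 (f x) (g x))"
  unfolding vec2_def by (intro C_k_add C_k_bilinear[OF bounded_bilinear_scaleR] C_k_const)

lemma smooth2_vec2: "smooth2 f \<Longrightarrow> smooth2 g \<Longrightarrow> smooth2 (\<lambda>x. vec2 (f x) (g x))"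
  by (simp add: smooth2_def C_k_vec2)

section \<open>Primitives along the second coordinate\<close>

text \<open>\<open>vertical_primitive f x\<close> is the integral of \<open>f (vec2 (x$1) t)\<close> over \<open>t \<in> [0, x$2]\<close>, written
  with \<open>t = x$2 * s\<close> so that the domain of integration does not depend on \<open>x\<close> and the Leibniz rule
  applies.\<close>

definition vertical_primitive :: "(real^2 \<Rightarrow> real) \<Rightarrow> real^2 \<Rightarrow> real" where
  "vertical_primitive f x = integral {0..1} (\<lambda>s. x$2 * f (vec2 (x$1) (x$2 * s)))"

lemma has_integral_derivative_scaled_ray:
  assumes f: "smooth2 f"
  shows "((\<lambda>t. f (vec2 a (b * t)) + b * t * partial 2 f (vec2 a (b * t))) has_integral f (vec2 a b)) {0..1}"
proof -
  have "((\<lambda>t. t * f (vec2 a (b * t))) has_vector_derivative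
      f (vec2 a (b * t)) + b * t * partial 2 f (vec2 a (b * t))) (at t within {0..1})" for t
  proof -
    have "((\<lambda>t. f (vec2 a (b * t))) has_real_derivative partial 2 f (vec2 a (b * t)) * b) (at t)"
      using DERIV_chain2[OF partial_along_line2[OF smooth2_differentiable[OF f]]
          DERIV_cmult_Id[of b t]] .
    then have "((\<lambda>t. t * f (vec2 a (b * t))) has_real_derivative
        f (vec2 a (b * t)) + b * t * partial 2 f (vec2 a (b * t))) (at t)"
      by (auto intro!: derivative_eq_intros simp: algebra_simps)
    then show ?thesis
      by (simp add: has_real_derivative_iff_has_vector_derivative has_vector_derivative_at_within)
  qed
  from fundamental_theorem_of_calculus[OF _ this] show ?thesis by simp
qed

lemma has_derivative_scaled_ray:
  assumes f: "smooth2 f"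
  shows "((\<lambda>x. x$2 * f (vec2 (x$1) (x$2 * t))) has_derivative (\<lambda>h.
      h$1 * (x$2 * partial 1 f (vec2 (x$1) (x$2 * t)))
    + h$2 * (f (vec2 (x$1) (x$2 * t)) + x$2 * t * partial 2 f (vec2 (x$1) (x$2 * t))))) (at x)"
proof -
  define p where "p = vec2 (x$1) (x$2 * t)"
  have "((\<lambda>x. vec2 (x$1) (x$2 * t)) has_derivative (\<lambda>h. vec2 (h$1) (h$2 * t))) (at x)"
    by (intro derivative_eq_intros has_derivative_vec_nth[OF has_derivative_ident]) auto
  from diff_chain_at[OF this has_derivative_partials[OF smooth2_differentiable[OF f]]]
  have "((\<lambda>x. f (vec2 (x$1) (x$2 * t))) has_derivative
      (\<lambda>h. h$1 * partial 1 f p + (h$2 * t) * partial 2 f p)) (at x)"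
    by (simp add: o_def p_def)
  then have "((\<lambda>x. x$2 * f (vec2 (x$1) (x$2 * t))) has_derivative
      (\<lambda>h. x$2 * (h$1 * partial 1 f p + (h$2 * t) * partial 2 f p) + h$2 * f p)) (at x)"
    by (intro derivative_eq_intros) (auto simp: p_def)
  then show ?thesis
    by (rule has_derivative_eq_rhs) (simp add: fun_eq_iff p_def algebra_simps)
qed

lemma blinfun_apply_vec2_coords:
  "blinfun_apply (a *\<^sub>R blinfun_inner_left (axis 1 1) + b *\<^sub>R blinfun_inner_left (axis 2 1 :: real^2)) h
    = h$1 * a + h$2 * (b::real)"
  by (simp add: inner_axis blinfun.add_left blinfun.scaleR_left mult.commute)

lemma has_derivative_vertical_primitive:
  assumes f: "smooth2 f"
  shows "(vertical_primitive f has_derivative (\<lambda>h. integral {0..1} (\<lambda>t.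
      h$1 * (x$2 * partial 1 f (vec2 (x$1) (x$2 * t)))
    + h$2 * (f (vec2 (x$1) (x$2 * t)) + x$2 * t * partial 2 f (vec2 (x$1) (x$2 * t)))))) (at x)"
proof -
  define p where "p x s = vec2 (x$1) (x$2 * s)" for x :: "real^2" and s :: real
  define al where "al x t = x$2 * partial 1 f (p x t)" for x t
  define be where "be x t = f (p x t) + x$2 * t * partial 2 f (p x t)" for x t
  define fx where "fx x t = al x t *\<^sub>R blinfun_inner_left (axis 1 1)
    + be x t *\<^sub>R blinfun_inner_left (axis 2 1 :: real^2)" for x t
  have cf: "continuous_on UNIV f" "continuous_on UNIV (partial 1 f)" "continuous_on UNIV (partial 2 f)"
    using f smooth2_partial smooth2_continuous_on by blast+
  have cp: "continuous_on UNIV (\<lambda>z::(real^2)\<times>real. p (fst z) (snd z))"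
    unfolding p_def by (intro continuous_intros)
  have der: "((\<lambda>x. x$2 * f (p x t)) has_derivative blinfun_apply (fx x t)) (at x within UNIV)" for x t
  proof -
    have "(\<lambda>h. h$1 * al x t + h$2 * be x t) = blinfun_apply (fx x t)"
      by (simp add: fun_eq_iff fx_def blinfun_apply_vec2_coords)
    with has_derivative_scaled_ray[OF f, of t x] show ?thesis by (simp add: al_def be_def p_def)
  qed
  have cal: "continuous_on UNIV (\<lambda>z::(real^2)\<times>real. al (fst z) (snd z))"
    unfolding al_def by (intro continuous_intros continuous_on_compose2[OF cf(2) cp]) auto
  have cbe: "continuous_on UNIV (\<lambda>z::(real^2)\<times>real. be (fst z) (snd z))"
    unfolding be_def
    by (intro continuous_intros continuous_on_compose2[OF cf(3) cp] continuous_on_compose2[OF cf(1) cp]) auto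
  have cfx: "continuous_on (UNIV \<times> cbox 0 1) (\<lambda>(x, t). fx x t)"
    unfolding fx_def case_prod_beta
    by (intro continuous_intros continuous_on_subset[OF cal] continuous_on_subset[OF cbe]) auto
  have "continuous_on UNIV (\<lambda>s. x$2 * f (p x s))" for x
    unfolding p_def by (intro continuous_intros continuous_on_compose2[OF cf(1)]) auto
  then have int: "(\<lambda>s. x$2 * f (p x s)) integrable_on cbox 0 1" for x
    by (meson continuous_on_subset integrable_continuous subset_UNIV)
  have L: "(vertical_primitive f has_derivative blinfun_apply (integral (cbox 0 1) (fx x))) (at x)"
    using leibniz_rule[where U=UNIV and f="\<lambda>x s. x$2 * f (p x s)" and a=0 and b=1 and fx=fx, OF der int cfx]
    by (simp add: vertical_primitive_def[abs_def] p_def)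
  have "continuous_on (cbox 0 1) (\<lambda>t. (\<lambda>(x, t). fx x t) (x, t))"
    by (rule continuous_on_compose2[OF cfx]) (auto intro: continuous_intros)
  then have "blinfun_apply (integral (cbox 0 1) (fx x))
      = (\<lambda>h. integral {0..1} (\<lambda>t. h$1 * al x t + h$2 * be x t))"
    by (intro ext, subst blinfun_apply_integral[OF integrable_continuous])
      (simp_all add: fx_def blinfun_apply_vec2_coords)
  with L show ?thesis by (simp add: al_def be_def p_def)
qed

lemma
  assumes f: "smooth2 f"
  shows vertical_primitive_differentiable: "vertical_primitive f differentiable (at x)"
    and partial1_vertical_primitive: "partial 1 (vertical_primitive f) x = vertical_primitive (partial 1 f) x"
    and partial2_vertical_primitive: "partial 2 (vertical_primitive f) x = f x"
proof -
  note D = has_derivative_vertical_primitive[OF f, of x]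
  show "vertical_primitive f differentiable (at x)" using D by (auto simp: differentiable_def)
  show "partial 1 (vertical_primitive f) x = vertical_primitive (partial 1 f) x"
    using partial_eq[OF D] by (simp add: vertical_primitive_def)
  show "partial 2 (vertical_primitive f) x = f x"
    using partial_eq[OF D] integral_unique[OF has_integral_derivative_scaled_ray[OF f, of "x$1" "x$2"]]
    by simp
qed

lemma vertical_primitive_has_real_derivative:
  assumes "smooth2 f"
  shows "((\<lambda>t. vertical_primitive f (vec2 a t)) has_real_derivative f (vec2 a t)) (at t)"
  using partial_along_line2[OF vertical_primitive_differentiable[OF assms]]
  by (simp add: partial2_vertical_primitive[OF assms])

lemma vertical_primitive_zero [simp]: "vertical_primitive f (vec2 a 0) = 0"
  by (simp add: vertical_primitive_def)

lemma C_k_vertical_primitive: "smooth2 f \<Longrightarrow> C_k k (vertical_primitive f)"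
proof (induction k arbitrary: f)
  case 0
  then show ?case
    using vertical_primitive_differentiable
    by (simp add: continuous_on_eq_continuous_at differentiable_imp_continuous_within)
next
  case (Suc k)
  have "partial 1 (vertical_primitive f) = vertical_primitive (partial 1 f)"
    "partial 2 (vertical_primitive f) = f"
    using partial1_vertical_primitive[OF Suc.prems] partial2_vertical_primitive[OF Suc.prems] by auto
  moreover have "C_k k (vertical_primitive (partial 1 f))" "C_k k f"
    using Suc smooth2_partial smooth2_def by blast+
  ultimately show ?case using vertical_primitive_differentiable[OF Suc.prems]
    unfolding C_k_Suc by (metis exhaust_2)
qed

lemma smooth2_vertical_primitive: "smooth2 f \<Longrightarrow> smooth2 (vertical_primitive f)"
  by (simp add: smooth2_def C_k_vertical_primitive)

section \<open>Symmetry of mixed partial derivatives\<close>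

lemma mixed_difference_partial21:
  assumes f: "smooth2 f" and h: "h > 0"
  obtains \<xi> \<eta> where "a < \<xi>" "\<xi> < a + h" "b < \<eta>" "\<eta> < b + h"
    "f (vec2 (a+h) (b+h)) - f (vec2 a (b+h)) - (f (vec2 (a+h) b) - f (vec2 a b))
      = h * h * partial 2 (partial 1 f) (vec2 \<xi> \<eta>)"
proof -
  obtain \<xi> where \<xi>: "a < \<xi>" "\<xi> < a + h"
    and e1: "(f (vec2 (a+h) (b+h)) - f (vec2 (a+h) b)) - (f (vec2 a (b+h)) - f (vec2 a b))
      = h * (partial 1 f (vec2 \<xi> (b+h)) - partial 1 f (vec2 \<xi> b))"
    using MVT2[of a "a+h" "\<lambda>s. f (vec2 s (b+h)) - f (vec2 s b)"
        "\<lambda>s. partial 1 f (vec2 s (b+h)) - partial 1 f (vec2 s b)",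
        OF _ DERIV_diff[OF partial_along_line1 partial_along_line1]] h
    by (auto simp: smooth2_differentiable[OF f])
  obtain \<eta> where \<eta>: "b < \<eta>" "\<eta> < b + h"
    and e2: "partial 1 f (vec2 \<xi> (b+h)) - partial 1 f (vec2 \<xi> b) = h * partial 2 (partial 1 f) (vec2 \<xi> \<eta>)"
    using MVT2[of b "b+h" "\<lambda>t. partial 1 f (vec2 \<xi> t)" "\<lambda>t. partial 2 (partial 1 f) (vec2 \<xi> t)"] h
      partial_along_line2[OF smooth2_differentiable[OF smooth2_partial[OF f]]] by auto
  show ?thesis using e1[unfolded e2] by (intro that[OF \<xi> \<eta>]) (simp add: algebra_simps)
qed

lemma mixed_difference_partial12:
  assumes f: "smooth2 f" and h: "h > 0"
  obtains \<xi> \<eta> where "a < \<xi>" "\<xi> < a + h" "b < \<eta>" "\<eta> < b + h"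
    "f (vec2 (a+h) (b+h)) - f (vec2 a (b+h)) - (f (vec2 (a+h) b) - f (vec2 a b))
      = h * h * partial 1 (partial 2 f) (vec2 \<xi> \<eta>)"
proof -
  obtain \<eta> where \<eta>: "b < \<eta>" "\<eta> < b + h"
    and e1: "(f (vec2 (a+h) (b+h)) - f (vec2 a (b+h))) - (f (vec2 (a+h) b) - f (vec2 a b))
      = h * (partial 2 f (vec2 (a+h) \<eta>) - partial 2 f (vec2 a \<eta>))"
    using MVT2[of b "b+h" "\<lambda>t. f (vec2 (a+h) t) - f (vec2 a t)"
        "\<lambda>t. partial 2 f (vec2 (a+h) t) - partial 2 f (vec2 a t)",
        OF _ DERIV_diff[OF partial_along_line2 partial_along_line2]] h
    by (auto simp: smooth2_differentiable[OF f])
  obtain \<xi> where \<xi>: "a < \<xi>" "\<xi> < a + h"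
    and e2: "partial 2 f (vec2 (a+h) \<eta>) - partial 2 f (vec2 a \<eta>) = h * partial 1 (partial 2 f) (vec2 \<xi> \<eta>)"
    using MVT2[of a "a+h" "\<lambda>s. partial 2 f (vec2 s \<eta>)" "\<lambda>s. partial 1 (partial 2 f) (vec2 s \<eta>)"] h
      partial_along_line1[OF smooth2_differentiable[OF smooth2_partial[OF f]]] by auto
  show ?thesis using e1[unfolded e2] by (intro that[OF \<xi> \<eta>]) (simp add: algebra_simps)
qed

lemma dist_vec2_le: "dist (vec2 s t) (vec2 a b) \<le> \<bar>s - a\<bar> + \<bar>t - b\<bar>"
  using norm_le_l1_cart[of "vec2 s t - vec2 a b"] by (simp add: dist_norm sum_2)

text \<open>Both mixed partials are limits of the same normalised second difference.\<close>

lemma partial_commute: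
  assumes f: "smooth2 (f :: real^2 \<Rightarrow> real)"
  shows "partial 2 (partial 1 f) x = partial 1 (partial 2 f) x"
proof (rule ccontr)
  define g1 g2 where "g1 = partial 2 (partial 1 f)" and "g2 = partial 1 (partial 2 f)"
  assume "partial 2 (partial 1 f) x \<noteq> partial 1 (partial 2 f) x"
  then have e: "\<bar>g1 x - g2 x\<bar> / 2 > 0" by (simp add: g1_def g2_def)
  have "isCont g1 x" "isCont g2 x"
    unfolding g1_def g2_def by (intro smooth2_isCont smooth2_partial f)+
  then obtain d1 d2 where d: "d1 > 0" "d2 > 0"
    and d1: "\<And>y. dist y x < d1 \<Longrightarrow> dist (g1 y) (g1 x) < \<bar>g1 x - g2 x\<bar> / 2"
    and d2: "\<And>y. dist y x < d2 \<Longrightarrow> dist (g2 y) (g2 x) < \<bar>g1 x - g2 x\<bar> / 2"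
    using e unfolding continuous_at_eps_delta by blast
  define h where "h = min d1 d2 / 3"
  have h: "h > 0" using d by (simp add: h_def)
  have near: "dist (vec2 \<xi> \<eta>) x < min d1 d2"
    if "x$1 < \<xi>" "\<xi> < x$1 + h" "x$2 < \<eta>" "\<eta> < x$2 + h" for \<xi> \<eta>
  proof -
    have "\<bar>\<xi> - x$1\<bar> < h" "\<bar>\<eta> - x$2\<bar> < h" using that by auto
    with dist_vec2_le[of \<xi> \<eta> "x$1" "x$2"] d show ?thesis unfolding h_def by (auto simp: min_def split: if_splits)
  qed
  obtain y1 y2 where y: "dist y1 x < d1" "dist y2 x < d2" and eq: "g1 y1 = g2 y2"
  proof -
    obtain \<xi>1 \<eta>1 where p1: "x$1 < \<xi>1" "\<xi>1 < x$1 + h" "x$2 < \<eta>1" "\<eta>1 < x$2 + h"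
      and q1: "f (vec2 (x$1+h) (x$2+h)) - f (vec2 (x$1) (x$2+h)) - (f (vec2 (x$1+h) (x$2)) - f (vec2 (x$1) (x$2)))
        = h * h * g1 (vec2 \<xi>1 \<eta>1)"
      using mixed_difference_partial21[OF f h] unfolding g1_def by blast
    obtain \<xi>2 \<eta>2 where p2: "x$1 < \<xi>2" "\<xi>2 < x$1 + h" "x$2 < \<eta>2" "\<eta>2 < x$2 + h"
      and q2: "f (vec2 (x$1+h) (x$2+h)) - f (vec2 (x$1) (x$2+h)) - (f (vec2 (x$1+h) (x$2)) - f (vec2 (x$1) (x$2)))
        = h * h * g2 (vec2 \<xi>2 \<eta>2)"
      using mixed_difference_partial12[OF f h] unfolding g2_def by blast
    have "g1 (vec2 \<xi>1 \<eta>1) = g2 (vec2 \<xi>2 \<eta>2)" using q1 q2 h by simp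
    with near[OF p1] near[OF p2] show thesis by (intro that) auto
  qed
  have "\<bar>g1 y1 - g1 x\<bar> < \<bar>g1 x - g2 x\<bar> / 2" "\<bar>g1 y1 - g2 x\<bar> < \<bar>g1 x - g2 x\<bar> / 2"
    using d1[OF y(1)] d2[OF y(2)] eq by (simp_all add: dist_real_def)
  then show False by (auto simp: abs_if split: if_splits)
qed

section \<open>Jacobian determinants and smooth inverses\<close>

definition jac_det :: "(real^2 \<Rightarrow> real^2) \<Rightarrow> real^2 \<Rightarrow> real" where
  "jac_det P x = partial 1 (\<lambda>y. P y $ 1) x * partial 2 (\<lambda>y. P y $ 2) x
    - partial 2 (\<lambda>y. P y $ 1) x * partial 1 (\<lambda>y. P y $ 2) x"

lemma has_derivative_coords:
  fixes P :: "real^2 \<Rightarrow> real^2"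
  assumes "P differentiable (at x)"
  shows "(P has_derivative (\<lambda>h. vec2 (h$1 * partial 1 (\<lambda>y. P y $ 1) x + h$2 * partial 2 (\<lambda>y. P y $ 1) x)
    (h$1 * partial 1 (\<lambda>y. P y $ 2) x + h$2 * partial 2 (\<lambda>y. P y $ 2) x))) (at x)"
proof -
  have "(\<lambda>h::real^2. h$1 *\<^sub>R partial 1 P x + h$2 *\<^sub>R partial 2 P x)
    = (\<lambda>h. vec2 (h$1 * partial 1 (\<lambda>y. P y $ 1) x + h$2 * partial 2 (\<lambda>y. P y $ 1) x)
        (h$1 * partial 1 (\<lambda>y. P y $ 2) x + h$2 * partial 2 (\<lambda>y. P y $ 2) x))"
    by (rule ext) (simp add: partial_vec_nth[OF assms] vec_eq_iff forall_2)
  then show ?thesis using has_derivative_partials[OF assms] by simp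
qed

lemma frechet_derivative_coords:
  fixes P :: "real^2 \<Rightarrow> real^2"
  assumes "P differentiable (at x)"
  shows "frechet_derivative P (at x) h = vec2 (h$1 * partial 1 (\<lambda>y. P y $ 1) x + h$2 * partial 2 (\<lambda>y. P y $ 1) x)
    (h$1 * partial 1 (\<lambda>y. P y $ 2) x + h$2 * partial 2 (\<lambda>y. P y $ 2) x)"
  by (simp add: frechet_derivative_at[OF has_derivative_coords[OF assms], symmetric])

lemma smooth2_jac_det: "smooth2 P \<Longrightarrow> smooth2 (jac_det P)"
  unfolding jac_det_def[abs_def] by (intro smooth2_minus smooth2_mult smooth2_partial smooth2_vec_nth)

lemma jac_det_comp:
  fixes Q R :: "real^2 \<Rightarrow> real^2"
  assumes Q: "smooth2 Q" and R: "smooth2 R"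
  shows "jac_det (\<lambda>x. Q (R x)) x = jac_det Q (R x) * jac_det R x"
proof -
  have "partial i (\<lambda>x. Q (R x) $ j) x = partial i (\<lambda>y. R y $ 1) x * partial 1 (\<lambda>y. Q y $ j) (R x)
      + partial i (\<lambda>y. R y $ 2) x * partial 2 (\<lambda>y. Q y $ j) (R x)" for i j
    using partial_comp[OF smooth2_differentiable[OF R] smooth2_differentiable[OF smooth2_vec_nth[OF Q]], of i]
    by (simp add: partial_vec_nth[OF smooth2_differentiable[OF R]])
  then show ?thesis unfolding jac_det_def by (simp add: algebra_simps)
qed

lemma has_derivative_inverse_map:
  fixes P :: "real^2 \<Rightarrow> real^2"
  assumes P: "smooth2 P" and GP: "\<forall>x. G (P x) = x" and PG: "\<forall>y. P (G y) = y"
    and J: "\<forall>x. jac_det P x \<noteq> 0"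
  shows "(G has_derivative (\<lambda>k. vec2
      ((partial 2 (\<lambda>y. P y $ 2) (G y) * k$1 - partial 2 (\<lambda>y. P y $ 1) (G y) * k$2) / jac_det P (G y))
      ((- partial 1 (\<lambda>y. P y $ 2) (G y) * k$1 + partial 1 (\<lambda>y. P y $ 1) (G y) * k$2) / jac_det P (G y))))
    (at y)"
proof -
  define x where "x = G y"
  define a b c d where "a = partial 1 (\<lambda>y. P y $ 1) x" and "b = partial 2 (\<lambda>y. P y $ 1) x"
    and "c = partial 1 (\<lambda>y. P y $ 2) x" and "d = partial 2 (\<lambda>y. P y $ 2) x"
  have Jx: "a * d - b * c \<noteq> 0" using J unfolding jac_det_def a_def b_def c_def d_def by blast
  have "(G has_derivative (\<lambda>k. vec2 ((d * k$1 - b * k$2) / (a * d - b * c))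
      ((- c * k$1 + a * k$2) / (a * d - b * c)))) (at (P x))"
  proof (rule has_derivative_inverse_strong[OF open_UNIV UNIV_I smooth2_continuous_on[OF P]])
    show "(P has_derivative (\<lambda>h. vec2 (h$1 * a + h$2 * b) (h$1 * c + h$2 * d))) (at x)"
      using has_derivative_coords[OF smooth2_differentiable[OF P]] unfolding a_def b_def c_def d_def .
    show "(\<lambda>h. vec2 (h$1 * a + h$2 * b) (h$1 * c + h$2 * d)) \<circ>
        (\<lambda>k. vec2 ((d * k$1 - b * k$2) / (a * d - b * c)) ((- c * k$1 + a * k$2) / (a * d - b * c))) = id"
    proof -
      have "(d * k1 - b * k2) / (a * d - b * c) * a + (- c * k1 + a * k2) / (a * d - b * c) * b = k1"
        "(d * k1 - b * k2) / (a * d - b * c) * c + (- c * k1 + a * k2) / (a * d - b * c) * d = k2" for k1 k2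
        using Jx by (simp_all add: divide_simps) (simp_all add: algebra_simps)
      then show ?thesis by (simp add: fun_eq_iff vec_eq_iff forall_2)
    qed
  qed (use GP in auto)
  moreover have "P x = y" using PG x_def by simp
  ultimately show ?thesis by (simp add: x_def a_def b_def c_def d_def jac_det_def)
qed

lemma C_k_inverse_map:
  fixes P :: "real^2 \<Rightarrow> real^2"
  assumes P: "smooth2 P" and GP: "\<forall>x. G (P x) = x" and PG: "\<forall>y. P (G y) = y"
    and J: "\<forall>x. jac_det P x \<noteq> 0"
  shows "C_k k G"
proof -
  have diff: "G differentiable (at y)" for y
    using has_derivative_inverse_map[OF assms] by (auto simp: differentiable_def)
  let ?a = "partial 1 (\<lambda>y. P y $ 1)" and ?b = "partial 2 (\<lambda>y. P y $ 1)"
    and ?c = "partial 1 (\<lambda>y. P y $ 2)" and ?d = "partial 2 (\<lambda>y. P y $ 2)"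
  have sm: "smooth2 ?a" "smooth2 ?b" "smooth2 ?c" "smooth2 ?d" "smooth2 (jac_det P)"
    using P by (auto intro: smooth2_partial smooth2_vec_nth smooth2_jac_det)
  have p1: "partial 1 G = (\<lambda>y. vec2 (?d (G y) * inverse (jac_det P (G y))) (- ?c (G y) * inverse (jac_det P (G y))))"
    and p2: "partial 2 G = (\<lambda>y. vec2 (- ?b (G y) * inverse (jac_det P (G y))) (?a (G y) * inverse (jac_det P (G y))))"
    by (rule ext, simp add: partial_eq[OF has_derivative_inverse_map[OF assms]] divide_inverse)+
  show ?thesis
  proof (induction k)
    case 0
    show ?case
      using diff by (simp add: continuous_on_eq_continuous_at differentiable_imp_continuous_within)
  next
    case (Suc k)
    have cG: "C_k k (\<lambda>y. g (G y))" if "smooth2 g" for g :: "real^2 \<Rightarrow> real"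
      using C_k_comp Suc.IH that smooth2_def by blast
    have cJ: "C_k k (\<lambda>y. inverse (jac_det P (G y)))"
      using C_k_inverse[OF cG[OF sm(5)]] J by blast
    have "C_k k (partial 1 G)" "C_k k (partial 2 G)" unfolding p1 p2
      by (intro C_k_vec2 C_k_bilinear[OF bounded_bilinear_mult]
          C_k_linear[OF bounded_linear_minus[OF bounded_linear_ident]] cJ cG sm)+
    then show ?case unfolding C_k_Suc using diff by (metis exhaust_2)
  qed
qed

lemma smooth2_inverse_map:
  assumes "smooth2 P" "\<forall>x. G (P x) = x" "\<forall>y. P (G y) = y" "\<forall>x. jac_det P x \<noteq> 0"
  shows "smooth2 G"
  using C_k_inverse_map[OF assms] by (simp add: smooth2_def)

section \<open>Quasi-periodic functions on the line\<close>

lemma quasi_periodic_of_int: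
  fixes f :: "real \<Rightarrow> real"
  assumes "\<And>s. f (s + 1) = f s + c"
  shows "f (s + of_int m) = f s + of_int m * c"
proof -
  have nat: "f (s + real n) = f s + real n * c" for s n
  proof (induction n)
    case (Suc n)
    have "f (s + real (Suc n)) = f ((s + real n) + 1)" by (simp add: ac_simps)
    also have "\<dots> = f s + real (Suc n) * c" by (simp only: assms Suc) (simp add: algebra_simps)
    finally show ?case .
  qed simp
  show ?thesis
  proof (cases "m \<ge> 0")
    case True
    then show ?thesis using nat[of s "nat m"] by simp
  next
    case False
    then show ?thesis using nat[of "s + of_int m" "nat (- m)"] by simp
  qed
qed

lemma quasi_periodic_surj:
  fixes f :: "real \<Rightarrow> real"
  assumes "continuous_on UNIV f" and "\<And>s. f (s + 1) = f s + c" and "c > 0"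
  obtains s where "f s = y"
proof -
  define n :: int where "n = \<lceil>\<bar>y - f 0\<bar> / c\<rceil>"
  have "\<bar>y - f 0\<bar> / c \<le> of_int n" unfolding n_def by (rule le_of_int_ceiling)
  then have n: "\<bar>y - f 0\<bar> \<le> of_int n * c" using assms(3) by (simp add: pos_divide_le_eq)
  then have "0 \<le> of_int n * c" using abs_ge_zero[of "y - f 0"] by linarith
  then have "0 \<le> n" using assms(3) by (simp add: zero_le_mult_iff)
  moreover have "f (of_int n) = f 0 + of_int n * c" "f (- of_int n) = f 0 - of_int n * c"
    using quasi_periodic_of_int[of f c, OF assms(2), of 0 n]
      quasi_periodic_of_int[of f c, OF assms(2), of 0 "- n"] by simp_all
  ultimately have "f (- of_int n) \<le> y" "y \<le> f (of_int n)" "- of_int n \<le> (of_int n :: real)"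
    using n by auto
  then show ?thesis
    using IVT'[of f "- of_int n" y "of_int n"] continuous_on_subset[OF assms(1)] that by blast
qed

lemma quasi_periodic_if_derivative_periodic:
  fixes f :: "real \<Rightarrow> real"
  assumes "\<And>t. (f has_real_derivative f' t) (at t)" and "\<And>t. f' (t + 1) = f' t"
  shows "f (t + 1) = f t + (f 1 - f 0)"
proof -
  have "((\<lambda>t. f (t + 1) - f t) has_real_derivative 0) (at t)" for t
    using DERIV_diff[OF DERIV_shift[THEN iffD1, OF assms(1)] assms(1), of 1 t] assms(2)[of t] by simp
  from DERIV_isconst_all[of "\<lambda>t. f (t + 1) - f t", OF allI, OF this, of t 0] show ?thesis by simp
qed

lemma strict_mono_if_derivative_pos:
  fixes f :: "real \<Rightarrow> real"
  assumes "\<And>t. (f has_real_derivative f' t) (at t)" and "\<And>t. f' t > 0"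
  shows "strict_mono f"
  by (rule strict_monoI, rule DERIV_pos_imp_increasing) (use assms in blast)+

section \<open>The Knothe--Rosenblatt map of a periodic density\<close>

definition torus_density :: "(real^2 \<Rightarrow> real) \<Rightarrow> bool" where
  "torus_density F \<longleftrightarrow> smooth2 F \<and> periodic2 F \<and> (\<forall>x. F x > 0)"

definition fibre_mass :: "(real^2 \<Rightarrow> real) \<Rightarrow> real \<Rightarrow> real" where
  "fibre_mass F a = vertical_primitive F (vec2 a 1)"

text \<open>The primitive \<open>s \<mapsto> \<integral>\<^sub>0\<^sup>s fibre_mass F\<close>, written through \<open>vertical_primitive\<close>
  so that it inherits smoothness.\<close>

definition marginal_primitive :: "(real^2 \<Rightarrow> real) \<Rightarrow> real \<Rightarrow> real" where
  "marginal_primitive F s = vertical_primitive (\<lambda>y. fibre_mass F (y$2)) (vec2 0 s)"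

definition total_mass :: "(real^2 \<Rightarrow> real) \<Rightarrow> real" where
  "total_mass F = marginal_primitive F 1"

definition rosenblatt :: "(real^2 \<Rightarrow> real) \<Rightarrow> real^2 \<Rightarrow> real^2" where
  "rosenblatt F x = vec2 (marginal_primitive F (x$1) / total_mass F)
    (vertical_primitive F x / fibre_mass F (x$1))"

lemma lattice_equiv_iff: "lattice_equiv x y \<longleftrightarrow> (\<exists>m n. x = y + vec2 (of_int m) (of_int n))"
proof
  assume "lattice_equiv x y"
  then have "(x - y)$1 \<in> \<int>" "(x - y)$2 \<in> \<int>" by (auto simp: lattice_equiv_def)
  then obtain m n where "(x - y)$1 = of_int m" "(x - y)$2 = of_int n" by (metis Ints_cases)
  then show "\<exists>m n. x = y + vec2 (of_int m) (of_int n)"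
    by (auto simp: vec_eq_iff forall_2 algebra_simps)
qed (auto simp: lattice_equiv_def forall_2)

lemma lattice_equiv_if_commutes_with_shifts:
  assumes "\<And>x m n. f (x + vec2 (of_int m) (of_int n)) = f x + vec2 (of_int m) (of_int n)"
  shows "lattice_equiv x y \<Longrightarrow> lattice_equiv (f x) (f y)"
  unfolding lattice_equiv_iff using assms by metis

context
  fixes F :: "real^2 \<Rightarrow> real"
  assumes F: "torus_density F"
begin

lemma torus_density_smooth: "smooth2 F" and torus_density_pos: "F x > 0"
  using F by (auto simp: torus_density_def)

lemma torus_density_shift: "F (vec2 (a + of_int m) (b + of_int n)) = F (vec2 a b)"
proof -
  have "lattice_equiv (vec2 (a + of_int m) (b + of_int n)) (vec2 a b)"
    by (simp add: lattice_equiv_def forall_2)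
  with F show ?thesis by (simp add: torus_density_def periodic2_def)
qed

lemma vertical_primitive_shift1: "vertical_primitive F (vec2 (a + of_int m) t) = vertical_primitive F (vec2 a t)"
  using torus_density_shift[of a m _ 0] by (simp add: vertical_primitive_def)

lemma strict_mono_vertical_primitive: "strict_mono (\<lambda>t. vertical_primitive F (vec2 a t))"
  by (rule strict_mono_if_derivative_pos[OF vertical_primitive_has_real_derivative])
    (simp_all add: torus_density_smooth torus_density_pos)

lemma fibre_mass_pos: "fibre_mass F a > 0"
  using strict_mono_vertical_primitive[of a, THEN strict_monoD, of 0 1] by (simp add: fibre_mass_def)

lemma fibre_mass_shift: "fibre_mass F (a + of_int m) = fibre_mass F a"
  by (simp add: fibre_mass_def vertical_primitive_shift1)

lemma vertical_primitive_shift2: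
  "vertical_primitive F (vec2 a (t + of_int n)) = vertical_primitive F (vec2 a t) + of_int n * fibre_mass F a"
proof (rule quasi_periodic_of_int)
  show "vertical_primitive F (vec2 a (s + 1)) = vertical_primitive F (vec2 a s) + fibre_mass F a" for s
    using quasi_periodic_if_derivative_periodic[OF vertical_primitive_has_real_derivative[OF torus_density_smooth]]
      torus_density_shift[of a 0 _ 1]
    by (simp add: fibre_mass_def)
qed

lemma smooth2_fibre_mass: "smooth2 (\<lambda>y. fibre_mass F (y$2))"
  unfolding fibre_mass_def
  by (intro smooth2_comp[OF smooth2_vertical_primitive[OF torus_density_smooth]] smooth2_vec2
      smooth2_vec_nth smooth2_id smooth2_const)

lemma marginal_primitive_has_real_derivative: "(marginal_primitive F has_real_derivative fibre_mass F s) (at s)"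
  using vertical_primitive_has_real_derivative[OF smooth2_fibre_mass, of 0 s]
  by (simp add: marginal_primitive_def[abs_def])

lemma strict_mono_marginal_primitive: "strict_mono (marginal_primitive F)"
  by (rule strict_mono_if_derivative_pos[OF marginal_primitive_has_real_derivative fibre_mass_pos])

lemma total_mass_pos: "total_mass F > 0"
  using strict_mono_marginal_primitive[THEN strict_monoD, of 0 1]
  by (simp add: total_mass_def marginal_primitive_def)

lemma marginal_primitive_shift: "marginal_primitive F (s + of_int m) = marginal_primitive F s + of_int m * total_mass F"
proof (rule quasi_periodic_of_int)
  show "marginal_primitive F (s + 1) = marginal_primitive F s + total_mass F" for s
    using quasi_periodic_if_derivative_periodic[OF marginal_primitive_has_real_derivative]
      fibre_mass_shift[of _ 1]
    by (simp add: total_mass_def marginal_primitive_def)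
qed

lemma smooth2_rosenblatt: "smooth2 (rosenblatt F)"
proof -
  have "smooth2 (\<lambda>x. marginal_primitive F (x$1))" "smooth2 (\<lambda>x. fibre_mass F (x$1))"
    unfolding marginal_primitive_def fibre_mass_def
    by (intro smooth2_comp[OF smooth2_vertical_primitive] smooth2_fibre_mass torus_density_smooth
        smooth2_vec2 smooth2_vec_nth smooth2_id smooth2_const)+
  then show ?thesis
    unfolding rosenblatt_def[abs_def] using fibre_mass_pos total_mass_pos
    by (intro smooth2_vec2 smooth2_divide smooth2_vertical_primitive torus_density_smooth smooth2_const)
      (auto simp: less_imp_neq[symmetric])
qed

text \<open>The Jacobian matrix of \<open>rosenblatt F\<close> is triangular.\<close>

lemma jac_det_rosenblatt: "jac_det (rosenblatt F) x = F x / total_mass F"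
proof -
  have d: "(\<lambda>y. rosenblatt F y $ i) differentiable (at x)" for i
    using smooth2_differentiable[OF smooth2_vec_nth[OF smooth2_rosenblatt]] .
  have "((\<lambda>s. rosenblatt F (vec2 s (x$2)) $ 1) has_real_derivative fibre_mass F (x$1) / total_mass F) (at (x$1))"
    using DERIV_cdivide[OF marginal_primitive_has_real_derivative] by (simp add: rosenblatt_def)
  then have a: "partial 1 (\<lambda>y. rosenblatt F y $ 1) x = fibre_mass F (x$1) / total_mass F"
    using DERIV_unique[OF partial_along_line1[of "\<lambda>y. rosenblatt F y $ 1" "x$1" "x$2"]] d by simp
  have "((\<lambda>t. rosenblatt F (vec2 (x$1) t) $ 1) has_real_derivative 0) (at (x$2))"
    by (simp add: rosenblatt_def)
  then have b: "partial 2 (\<lambda>y. rosenblatt F y $ 1) x = 0"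
    using DERIV_unique[OF partial_along_line2[of "\<lambda>y. rosenblatt F y $ 1" "x$1" "x$2"]] d by simp
  have "((\<lambda>t. rosenblatt F (vec2 (x$1) t) $ 2) has_real_derivative F x / fibre_mass F (x$1)) (at (x$2))"
    using DERIV_cdivide[OF vertical_primitive_has_real_derivative[OF torus_density_smooth, of "x$1" "x$2"]]
    by (simp add: rosenblatt_def)
  then have d: "partial 2 (\<lambda>y. rosenblatt F y $ 2) x = F x / fibre_mass F (x$1)"
    using DERIV_unique[OF partial_along_line2[of "\<lambda>y. rosenblatt F y $ 2" "x$1" "x$2"]] d by simp
  show ?thesis unfolding jac_det_def a b d using fibre_mass_pos[of "x$1"] by simp
qed

lemma rosenblatt_shift:
  "rosenblatt F (x + vec2 (of_int m) (of_int n)) = rosenblatt F x + vec2 (of_int m) (of_int n)"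
proof -
  have e: "x + vec2 (of_int m) (of_int n) = vec2 (x$1 + of_int m) (x$2 + of_int n)"
    by (simp add: vec_eq_iff forall_2)
  show ?thesis
    unfolding e using total_mass_pos fibre_mass_pos[of "x$1"]
    by (simp add: rosenblatt_def vec_eq_iff forall_2 add_divide_distrib vertical_primitive_shift1
        vertical_primitive_shift2 fibre_mass_shift marginal_primitive_shift)
qed

lemma inj_rosenblatt: "inj (rosenblatt F)"
proof (rule injI)
  fix x y assume e: "rosenblatt F x = rosenblatt F y"
  then have "marginal_primitive F (x$1) = marginal_primitive F (y$1)"
    using total_mass_pos by (simp add: rosenblatt_def vec_eq_iff forall_2)
  then have 1: "x$1 = y$1" using strict_mono_marginal_primitive strict_mono_eq by blast
  with e have "vertical_primitive F x = vertical_primitive F y"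
    using fibre_mass_pos[of "y$1"] by (simp add: rosenblatt_def vec_eq_iff forall_2)
  then have "vertical_primitive F (vec2 (x$1) (x$2)) = vertical_primitive F (vec2 (x$1) (y$2))"
    using 1 by (metis vec2_eta)
  then have "x$2 = y$2" using strict_mono_vertical_primitive strict_mono_eq by blast
  with 1 show "x = y" by (simp add: vec_eq_iff forall_2)
qed

lemma surj_rosenblatt: "surj (rosenblatt F)"
proof -
  have cont: "continuous_on UNIV (marginal_primitive F)"
    "continuous_on UNIV (\<lambda>t. vertical_primitive F (vec2 a t))" for a
    using marginal_primitive_has_real_derivative vertical_primitive_has_real_derivative[OF torus_density_smooth]
    by (meson DERIV_isCont continuous_at_imp_continuous_on)+
  have "\<exists>x. rosenblatt F x = y" for y
  proof -
    obtain s t where "marginal_primitive F s = y$1 * total_mass F"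
      and "vertical_primitive F (vec2 s t) = y$2 * fibre_mass F s"
      using quasi_periodic_surj[of "marginal_primitive F" "total_mass F", OF _
          marginal_primitive_shift[of _ 1, simplified] total_mass_pos]
        quasi_periodic_surj[of "\<lambda>t. vertical_primitive F (vec2 _ t)" "fibre_mass F _", OF _
          vertical_primitive_shift2[of _ _ 1, simplified] fibre_mass_pos]
        cont
      by metis
    then have "rosenblatt F (vec2 s t) = y"
      using total_mass_pos fibre_mass_pos[of s] by (simp add: rosenblatt_def vec_eq_iff forall_2)
    then show ?thesis ..
  qed
  then show ?thesis by (metis surj_def)
qed

lemma rosenblatt_inv_rosenblatt: "rosenblatt F (inv (rosenblatt F) y) = y"
  and inv_rosenblatt_rosenblatt: "inv (rosenblatt F) (rosenblatt F x) = x"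
  using surj_f_inv_f[OF surj_rosenblatt] inv_f_f[OF inj_rosenblatt] by auto

lemma smooth2_inv_rosenblatt: "smooth2 (inv (rosenblatt F))"
proof (rule smooth2_inverse_map[OF smooth2_rosenblatt])
  show "\<forall>x. jac_det (rosenblatt F) x \<noteq> 0"
    using jac_det_rosenblatt total_mass_pos torus_density_pos
    by (simp add: less_imp_neq[symmetric])
qed (simp_all add: rosenblatt_inv_rosenblatt inv_rosenblatt_rosenblatt)

lemma inv_rosenblatt_shift:
  "inv (rosenblatt F) (y + vec2 (of_int m) (of_int n)) = inv (rosenblatt F) y + vec2 (of_int m) (of_int n)"
  by (metis rosenblatt_shift inv_rosenblatt_rosenblatt rosenblatt_inv_rosenblatt)

end

section \<open>Transport of densities\<close>

definition density_transport :: "(real^2 \<Rightarrow> real) \<Rightarrow> (real^2 \<Rightarrow> real) \<Rightarrow> real^2 \<Rightarrow> real^2" where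
  "density_transport F P x = inv (rosenblatt P) (rosenblatt F x)"

context
  fixes F P :: "real^2 \<Rightarrow> real"
  assumes F: "torus_density F" and P: "torus_density P"
begin

lemma smooth2_density_transport: "smooth2 (density_transport F P)"
  unfolding density_transport_def[abs_def]
  by (rule smooth2_comp[OF smooth2_inv_rosenblatt[OF P] smooth2_rosenblatt[OF F]])

lemma density_transport_inverse: "density_transport P F (density_transport F P x) = x"
  by (simp add: density_transport_def rosenblatt_inv_rosenblatt[OF P] inv_rosenblatt_rosenblatt[OF F])

lemma density_transport_shift:
  "density_transport F P (x + vec2 (of_int m) (of_int n)) = density_transport F P x + vec2 (of_int m) (of_int n)"
  by (simp add: density_transport_def rosenblatt_shift[OF F] inv_rosenblatt_shift[OF P])

lemma density_transport_jac_det: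
  "P (density_transport F P x) * jac_det (density_transport F P) x = (total_mass P / total_mass F) * F x"
proof -
  have "rosenblatt F = (\<lambda>x. rosenblatt P (density_transport F P x))"
    by (simp add: fun_eq_iff density_transport_def rosenblatt_inv_rosenblatt[OF P])
  then have "jac_det (rosenblatt F) x = jac_det (rosenblatt P) (density_transport F P x) * jac_det (density_transport F P) x"
    using jac_det_comp[OF smooth2_rosenblatt[OF P] smooth2_density_transport] by metis
  then show ?thesis
    using total_mass_pos[OF F] total_mass_pos[OF P]
    by (simp add: jac_det_rosenblatt[OF F] jac_det_rosenblatt[OF P] field_simps)
qed

lemma jac_det_density_transport_nonzero: "jac_det (density_transport F P) x \<noteq> 0"
  using density_transport_jac_det[of x] total_mass_pos[OF F] total_mass_pos[OF P] torus_density_pos[OF F, of x]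
  by (metis divide_pos_pos mult_not_zero mult_pos_pos less_irrefl)

end

lemma torus_diffeo_density_transport:
  assumes F: "torus_density F" and P: "torus_density P"
  shows "torus_diffeo (density_transport F P) (density_transport P F)"
  unfolding torus_diffeo_def
  using smooth2_density_transport[OF F P] smooth2_density_transport[OF P F]
    density_transport_inverse[OF F P] density_transport_inverse[OF P F]
    lattice_equiv_if_commutes_with_shifts[OF density_transport_shift[OF F P]]
    lattice_equiv_if_commutes_with_shifts[OF density_transport_shift[OF P F]]
  by (simp add: lattice_equiv_def)

section \<open>Divergence of pushed-forward fields\<close>

lemma divergence_partials: "divergence u x = partial 1 (\<lambda>y. u y $ 1) x + partial 2 (\<lambda>y. u y $ 2) x"
  by (simp add: divergence_def sum_2 partial_def)

lemma divergence_scaleR_const: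
  assumes "\<forall>x. u differentiable (at x)"
  shows "divergence (\<lambda>y. c *\<^sub>R u y) x = c * divergence u x"
proof -
  have "(\<lambda>y. u y $ j) differentiable (at x)" for j
    using assms by (simp add: differentiable_compose[OF bounded_linear_imp_differentiable[OF bounded_linear_vec_nth]])
  then have "partial i (\<lambda>y. c * u y $ j) x = c * partial i (\<lambda>y. u y $ j) x" for i j
    by (intro partial_linear[OF bounded_linear_mult_right])
  then show ?thesis by (simp add: divergence_partials algebra_simps)
qed

lemma partial_comp_inverse_map:
  fixes Z W :: "real^2 \<Rightarrow> real^2"
  assumes "smooth2 Z" "\<forall>x. W (Z x) = x" "\<forall>z. Z (W z) = z" "\<forall>x. jac_det Z x \<noteq> 0"
    and g: "g differentiable (at (W z))"
  shows "partial 1 (\<lambda>y. g (W y)) z = (partial 2 (\<lambda>y. Z y $ 2) (W z) * partial 1 g (W z)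
      - partial 1 (\<lambda>y. Z y $ 2) (W z) * partial 2 g (W z)) / jac_det Z (W z)"
    and "partial 2 (\<lambda>y. g (W y)) z = (partial 1 (\<lambda>y. Z y $ 1) (W z) * partial 2 g (W z)
      - partial 2 (\<lambda>y. Z y $ 1) (W z) * partial 1 g (W z)) / jac_det Z (W z)"
  using partial_comp[OF differentiableI[OF has_derivative_inverse_map[OF assms(1-4)]] g]
    partial_eq[OF has_derivative_inverse_map[OF assms(1-4)]]
  by (simp_all add: diff_divide_distrib)

text \<open>The identity behind the Piola transform: the rows of the adjugate of \<open>DZ\<close> are divergence free
  (this is where the symmetry of second derivatives enters, as \<open>a2 = b1\<close> and \<open>c2 = d1\<close>), and
  \<open>adj(DZ) (DZ u) = J u\<close>.\<close>

lemma divergence_adjugate_algebra: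
  fixes a b c d a1 a2 b1 b2 c1 c2 d1 d2 u1 u2 u11 u12 u21 u22 J J1 J2 P1 P2 P11 P12 P21 P22 :: real
  assumes J: "J = a * d - b * c" "J \<noteq> 0"
    and J': "J1 = a * d1 + a1 * d - (b * c1 + b1 * c)" "J2 = a * d2 + a2 * d - (b * c2 + b2 * c)"
    and P: "P1 = a * u1 + b * u2" "P2 = c * u1 + d * u2"
    and P': "P11 = a * u11 + a1 * u1 + (b * u21 + b1 * u2)" "P12 = a * u12 + a2 * u1 + (b * u22 + b2 * u2)"
      "P21 = c * u11 + c1 * u1 + (d * u21 + d1 * u2)" "P22 = c * u12 + c2 * u1 + (d * u22 + d2 * u2)"
    and sym: "a2 = b1" "c2 = d1"
  shows "d * ((P11 * J - P1 * J1) / (J * J)) - c * ((P12 * J - P1 * J2) / (J * J))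
    + (a * ((P22 * J - P2 * J2) / (J * J)) - b * ((P21 * J - P2 * J1) / (J * J))) = u11 + u22"
proof -
  have "d * P1 - b * P2 = J * u1" "a * P2 - c * P1 = J * u2"
    unfolding J P by algebra+
  moreover have "d * P11 - c * P12 + (a * P22 - b * P21) = J * (u11 + u22) + J1 * u1 + J2 * u2"
    unfolding J J' P' sym by algebra
  ultimately have "J * (d * P11 - c * P12 + (a * P22 - b * P21))
      - (J1 * (d * P1 - b * P2) + J2 * (a * P2 - c * P1)) = J * J * (u11 + u22)"
    by algebra
  moreover have "d * ((P11 * J - P1 * J1) / (J * J)) - c * ((P12 * J - P1 * J2) / (J * J))
    + (a * ((P22 * J - P2 * J2) / (J * J)) - b * ((P21 * J - P2 * J1) / (J * J)))
    = (J * (d * P11 - c * P12 + (a * P22 - b * P21))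
      - (J1 * (d * P1 - b * P2) + J2 * (a * P2 - c * P1))) / (J * J)"
    using J(2) by (simp add: field_simps)
  ultimately show ?thesis using J(2) by simp
qed

lemma piola_identity:
  fixes Z W u :: "real^2 \<Rightarrow> real^2"
  assumes Z: "smooth2 Z" and WZ: "\<forall>x. W (Z x) = x" and ZW: "\<forall>z. Z (W z) = z"
    and JZ: "\<forall>x. jac_det Z x \<noteq> 0" and u: "smooth2 u"
  shows "divergence (\<lambda>y. inverse (jac_det Z (W y)) *\<^sub>R frechet_derivative Z (at (W y)) (u (W y))) z
    = divergence u (W z) / jac_det Z (W z)"
proof -
  define a b c d where "a = partial 1 (\<lambda>y. Z y $ 1)" and "b = partial 2 (\<lambda>y. Z y $ 1)"
    and "c = partial 1 (\<lambda>y. Z y $ 2)" and "d = partial 2 (\<lambda>y. Z y $ 2)"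
  define u1 u2 where "u1 y = u y $ 1" and "u2 y = u y $ 2" for y
  define J where "J = jac_det Z"
  define P1 P2 where "P1 y = a y * u1 y + b y * u2 y" and "P2 y = c y * u1 y + d y * u2 y" for y
  define x where "x = W z"
  have s: "smooth2 a" "smooth2 b" "smooth2 c" "smooth2 d" "smooth2 u1" "smooth2 u2" "smooth2 J"
    unfolding a_def b_def c_def d_def u1_def[abs_def] u2_def[abs_def] J_def
    by (intro smooth2_partial smooth2_vec_nth smooth2_jac_det Z u)+
  have sP: "smooth2 P1" "smooth2 P2"
    unfolding P1_def[abs_def] P2_def[abs_def] by (intro smooth2_add smooth2_mult s)+
  have J_eq: "J = (\<lambda>y. a y * d y - b y * c y)"
    by (simp add: fun_eq_iff J_def jac_det_def a_def b_def c_def d_def)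
  have Jx: "J x \<noteq> 0" using JZ by (simp add: J_def)
  have pJ: "partial j J x = a x * partial j d x + partial j a x * d x - (b x * partial j c x + partial j b x * c x)" for j
    unfolding J_eq by (simp add: partial_minus partial_mult smooth2_differentiable smooth2_mult s)
  have pP: "partial j P1 x = a x * partial j u1 x + partial j a x * u1 x + (b x * partial j u2 x + partial j b x * u2 x)"
    "partial j P2 x = c x * partial j u1 x + partial j c x * u1 x + (d x * partial j u2 x + partial j d x * u2 x)" for j
    unfolding P1_def[abs_def] P2_def[abs_def]
    by (simp_all add: partial_add partial_mult smooth2_differentiable smooth2_mult s)
  have sym: "partial 2 a x = partial 1 b x" "partial 2 c x = partial 1 d x"
    unfolding a_def b_def c_def d_def by (intro partial_commute smooth2_vec_nth Z)+
  have pG: "partial j (\<lambda>y. P y / J y) x = (partial j P x * J x - P x * partial j J x) / (J x * J x)"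
    if "smooth2 P" for P j
    using partial_divide[OF smooth2_differentiable[OF that] smooth2_differentiable[OF s(7)] Jx] .
  have "(\<lambda>y. inverse (jac_det Z (W y)) *\<^sub>R frechet_derivative Z (at (W y)) (u (W y)))
      = (\<lambda>y. vec2 (P1 (W y) / J (W y)) (P2 (W y) / J (W y)))"
    by (simp add: fun_eq_iff frechet_derivative_coords[OF smooth2_differentiable[OF Z]] vec_eq_iff forall_2
        J_def P1_def P2_def a_def b_def c_def d_def u1_def u2_def field_simps)
  then have "divergence (\<lambda>y. inverse (jac_det Z (W y)) *\<^sub>R frechet_derivative Z (at (W y)) (u (W y))) z
      = partial 1 (\<lambda>y. P1 (W y) / J (W y)) z + partial 2 (\<lambda>y. P2 (W y) / J (W y)) z"
    by (simp add: divergence_partials)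
  also have "\<dots> = (d x * partial 1 (\<lambda>y. P1 y / J y) x - c x * partial 2 (\<lambda>y. P1 y / J y) x
      + (a x * partial 2 (\<lambda>y. P2 y / J y) x - b x * partial 1 (\<lambda>y. P2 y / J y) x)) / J x"
    using partial_comp_inverse_map[OF Z WZ ZW JZ, of "\<lambda>y. P1 y / J y" z]
      partial_comp_inverse_map[OF Z WZ ZW JZ, of "\<lambda>y. P2 y / J y" z] s(7) sP Jx
    by (simp add: smooth2_differentiable smooth2_divide a_def b_def c_def d_def J_def x_def
        add_divide_distrib)
  also have "\<dots> = (partial 1 u1 x + partial 2 u2 x) / J x"
    unfolding pG[OF sP(1)] pG[OF sP(2)]
    by (rule arg_cong[where f = "\<lambda>t. t / J x"], rule divergence_adjugate_algebra[OF _ Jx pJ[of 1] pJ[of 2]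
        _ _ pP(1)[of 1] pP(1)[of 2] pP(2)[of 1] pP(2)[of 2] sym])
      (simp_all add: J_eq P1_def P2_def)
  also have "\<dots> = divergence u (W z) / jac_det Z (W z)"
    by (simp add: divergence_partials u1_def[abs_def] u2_def[abs_def] J_def x_def)
  finally show ?thesis .
qed

lemma divergence_pushforward_eq_0:
  fixes Z W v :: "real^2 \<Rightarrow> real^2" and r1 r2 :: "real^2 \<Rightarrow> real"
  assumes Z: "smooth2 Z" and WZ: "\<forall>x. W (Z x) = x" and ZW: "\<forall>z. Z (W z) = z"
    and JZ: "\<forall>x. jac_det Z x \<noteq> 0" and r: "\<forall>x. r2 (Z x) * jac_det Z x = r1 x"
    and r1: "smooth2 r1" and v: "smooth2 v"
    and div0: "\<forall>x. divergence (\<lambda>y. r1 y *\<^sub>R v y) x = 0"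
  shows "divergence (\<lambda>y. r2 y *\<^sub>R pushforward Z W v y) z = 0"
proof -
  have "r2 y *\<^sub>R pushforward Z W v y
      = inverse (jac_det Z (W y)) *\<^sub>R frechet_derivative Z (at (W y)) (r1 (W y) *\<^sub>R v (W y))" for y
  proof -
    have "linear (frechet_derivative Z (at (W y)))"
      using has_derivative_linear[OF has_derivative_frechet_derivative[OF smooth2_differentiable[OF Z]]] .
    moreover have "r2 y = inverse (jac_det Z (W y)) * r1 (W y)"
      using r[rule_format, of "W y"] JZ ZW by (simp add: field_simps)
    ultimately show ?thesis by (simp add: pushforward_def linear_scale)
  qed
  then have "divergence (\<lambda>y. r2 y *\<^sub>R pushforward Z W v y) z
      = divergence (\<lambda>y. r1 y *\<^sub>R v y) (W z) / jac_det Z (W z)"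
    using piola_identity[OF Z WZ ZW JZ smooth2_scaleR[OF r1 v]] by simp
  with div0 show ?thesis by simp
qed

section \<open>Transport of eigenfunctions\<close>

lemma frechet_derivative_inverse_cancel:
  assumes "smooth2 Z" "smooth2 W" "\<forall>x. W (Z x) = x" "\<forall>z. Z (W z) = z"
  shows "frechet_derivative W (at z) (frechet_derivative Z (at (W z)) h) = h"
proof -
  have "frechet_derivative (W \<circ> Z) (at (W z))
      = frechet_derivative W (at (Z (W z))) \<circ> frechet_derivative Z (at (W z))"
    by (rule frechet_derivative_compose) (use assms smooth2_differentiable in blast)+
  moreover have "W \<circ> Z = id" using assms(3) by (simp add: fun_eq_iff)
  ultimately show ?thesis using assms(4) by (metis comp_apply frechet_derivative_id id_apply)
qed

lemma frechet_derivative_pushforward: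
  assumes Z: "smooth2 Z" and W: "smooth2 W" and "\<forall>x. W (Z x) = x" "\<forall>z. Z (W z) = z"
    and phi: "smooth2 phi"
  shows "frechet_derivative (phi \<circ> W) (at z) (pushforward Z W v z) = frechet_derivative phi (at (W z)) (v (W z))"
proof -
  have "frechet_derivative (phi \<circ> W) (at z) = frechet_derivative phi (at (W z)) \<circ> frechet_derivative W (at z)"
    by (rule frechet_derivative_compose) (use W phi smooth2_differentiable in blast)+
  then show ?thesis
    unfolding pushforward_def using frechet_derivative_inverse_cancel[OF assms(1-4)] by simp
qed

lemma eigenfun_pushforward_iff:
  fixes phi :: "real^2 \<Rightarrow> complex"
  assumes Z: "smooth2 Z" and W: "smooth2 W" and WZ: "\<forall>x. W (Z x) = x" and ZW: "\<forall>z. Z (W z) = z"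
    and W_lattice: "\<forall>x y. lattice_equiv x y \<longrightarrow> lattice_equiv (W x) (W y)"
    and per: "periodic2 phi"
  shows "eigenfun v lam phi \<longleftrightarrow> eigenfun (pushforward Z W v) lam (phi \<circ> W)"
proof
  assume e: "eigenfun v lam phi"
  then have sp: "smooth2 phi" by (simp add: eigenfun_def)
  then have "smooth2 (phi \<circ> W)" using smooth2_comp[OF _ W] by (simp add: o_def)
  moreover have "frechet_derivative (phi \<circ> W) (at z) (pushforward Z W v z) = lam * (phi \<circ> W) z" for z
    using frechet_derivative_pushforward[OF Z W WZ ZW sp, of z v] e by (simp add: eigenfun_def)
  moreover obtain x0 where "phi x0 \<noteq> 0" using e by (auto simp: eigenfun_def)
  then have "(phi \<circ> W) (Z x0) \<noteq> 0" using WZ by simp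
  moreover have "periodic2 (phi \<circ> W)" using per W_lattice unfolding periodic2_def by simp
  ultimately show "eigenfun (pushforward Z W v) lam (phi \<circ> W)"
    unfolding eigenfun_def by blast
next
  assume e: "eigenfun (pushforward Z W v) lam (phi \<circ> W)"
  have "phi = (\<lambda>x. (phi \<circ> W) (Z x))" using WZ by (simp add: fun_eq_iff)
  then have sp: "smooth2 phi" using smooth2_comp[OF _ Z, of "phi \<circ> W"] e by (simp add: eigenfun_def)
  obtain z0 where "(phi \<circ> W) z0 \<noteq> 0" using e by (auto simp: eigenfun_def)
  moreover have "frechet_derivative phi (at x) (v x) = lam * phi x" for x
    using e frechet_derivative_pushforward[OF Z W WZ ZW sp, of "Z x" v] WZ
    by (simp add: eigenfun_def)
  ultimately show "eigenfun v lam phi"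
    unfolding eigenfun_def using sp per by auto
qed

lemma eigenvalues_pushforward:
  assumes Z: "smooth2 Z" and W: "smooth2 W" and WZ: "\<forall>x. W (Z x) = x" and ZW: "\<forall>z. Z (W z) = z"
    and Z_lattice: "\<forall>x y. lattice_equiv x y \<longrightarrow> lattice_equiv (Z x) (Z y)"
    and W_lattice: "\<forall>x y. lattice_equiv x y \<longrightarrow> lattice_equiv (W x) (W y)"
  shows "eigenvalues (pushforward Z W v) = eigenvalues v"
proof
  show "eigenvalues v \<subseteq> eigenvalues (pushforward Z W v)"
  proof
    fix lam assume "lam \<in> eigenvalues v"
    then obtain phi where e: "eigenfun v lam phi" by (auto simp: eigenvalues_def)
    then have "periodic2 phi" by (simp add: eigenfun_def)
    with e have "eigenfun (pushforward Z W v) lam (phi \<circ> W)"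
      using eigenfun_pushforward_iff[OF assms(1-4) W_lattice] by blast
    then show "lam \<in> eigenvalues (pushforward Z W v)" by (auto simp: eigenvalues_def)
  qed
  show "eigenvalues (pushforward Z W v) \<subseteq> eigenvalues v"
  proof
    fix lam assume "lam \<in> eigenvalues (pushforward Z W v)"
    then obtain psi where e: "eigenfun (pushforward Z W v) lam psi" by (auto simp: eigenvalues_def)
    have "periodic2 (psi \<circ> Z)"
      using e Z_lattice unfolding eigenfun_def periodic2_def by simp
    moreover have "psi \<circ> Z \<circ> W = psi" using ZW by (simp add: fun_eq_iff)
    ultimately have "eigenfun v lam (psi \<circ> Z)"
      using eigenfun_pushforward_iff[OF assms(1-4) W_lattice] e by metis
    then show "lam \<in> eigenvalues v" by (auto simp: eigenvalues_def)
  qed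
qed

theorem mainTheorem2:
  fixes F pi :: "real^2 \<Rightarrow> real" and v :: "real^2 \<Rightarrow> real^2"
  assumes "prob_density F" and "prob_density pi"
    and "vfield v"
    and "\<forall>x. divergence (\<lambda>y. F y *\<^sub>R v y) x = 0"
  shows "\<exists>Z W. torus_diffeo Z W \<and>
           (\<forall>x. divergence (\<lambda>y. pi y *\<^sub>R pushforward Z W v y) x = 0) \<and>
           eigenvalues (pushforward Z W v) = eigenvalues v \<and>
           (\<forall>lam phi. periodic2 phi \<longrightarrow>
              (eigenfun v lam phi \<longleftrightarrow> eigenfun (pushforward Z W v) lam (phi \<circ> W)))"
proof -
  have F: "torus_density F" and P: "torus_density pi"
    using assms(1,2) by (simp_all add: prob_density_def torus_density_def)
  have v: "smooth2 v" using assms(3) by (simp add: vfield_def)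
  define Z W where "Z = density_transport F pi" and "W = density_transport pi F"
  have diffeo: "torus_diffeo Z W"
    unfolding Z_def W_def by (rule torus_diffeo_density_transport[OF F P])
  have Z: "smooth2 Z" "smooth2 W" "\<forall>x. W (Z x) = x" "\<forall>z. Z (W z) = z"
    using diffeo density_transport_inverse[OF F P] density_transport_inverse[OF P F]
    by (simp_all add: torus_diffeo_def Z_def W_def)
  have cF: "smooth2 (\<lambda>x. total_mass pi / total_mass F * F x)"
    by (intro smooth2_mult smooth2_const torus_density_smooth[OF F])
  have "\<forall>x. divergence (\<lambda>y. (total_mass pi / total_mass F * F y) *\<^sub>R v y) x = 0"
    using divergence_scaleR_const[of "\<lambda>y. F y *\<^sub>R v y" "total_mass pi / total_mass F"] assms(4)
      smooth2_differentiable[OF smooth2_scaleR[OF torus_density_smooth[OF F] v]] by simp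
  then have "\<forall>x. divergence (\<lambda>y. pi y *\<^sub>R pushforward Z W v y) x = 0"
    using divergence_pushforward_eq_0[OF Z(1,3,4) _ _ cF v] jac_det_density_transport_nonzero[OF F P]
      density_transport_jac_det[OF F P] unfolding Z_def by blast
  moreover have "eigenvalues (pushforward Z W v) = eigenvalues v"
    using eigenvalues_pushforward[OF Z] diffeo by (simp add: torus_diffeo_def)
  moreover have "\<forall>lam phi. periodic2 phi \<longrightarrow>
      (eigenfun v lam phi \<longleftrightarrow> eigenfun (pushforward Z W v) lam (phi \<circ> W))"
    using eigenfun_pushforward_iff[OF Z] diffeo by (simp add: torus_diffeo_def)
  ultimately show ?thesis using diffeo by blast
qed

end
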